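(* Fix $n\ge 1$ and let $x\in\mathcal{NM}_n$. Then $\chi^+(x)$ equals the number of minimal idempotent join-irreducible elements $g\in\mathcal{NM}_n$ such that $g\le x$.
   Context: An NM algebra is an algebra $\langle A,\wedge,\vee,\odot,\to,\bot,\top\rangle$ such that $(A,\wedge,\vee,\bot,\top)$ is a bounded lattice, $\langle A,\odot,\top\rangle$ is a commutative monoid, and for all $x,y,z$: $x\odot y\le z$ iff $x\le y\to z$; $(x\to y)\vee(y\to x)=\top$; $\neg(x\odot y)\vee((x\wedge y)\to(x\odot y))=\top$ where $\neg x:=x\to\bot$; and $\neg\neg x=x$. $\mathcal{NM}_n$ denotes the free NM algebra on $n$ generators, i.e. the Lindenbaum algebra of formulas of Nilpotent Minimum logic in the variables $x_1,\dots,x_n$ modulo logical equivalence; equivalently, the subalgebra of $[0,1]^{[0,1]^n}$ generated by the coordinate projections, where $[0,1]$ carries the standard NM operations ($\wedge=\min$, $\vee=\max$, $x\odot y=\min(x,y)$ if $x+y>1$ and $0$ otherwise, $x\to y=1$ if $x\le y$ and $\max(1-x,y)$ otherwise). It is a finite distributive lattice. A valuation on a distributive lattice $L$ is a map $\nu:L\to\mathbb{R}$ with $\nu(x)+\nu(y)=\nu(x\vee y)+\nu(x\wedge y)$ for all $x,y$; on a finite distributive lattice a valuation is uniquely determined by its values on join-irreducible elements and on $\bot$. An element is join-irreducible if it is not $\bot$ and $x=y\vee z$ implies $x=y$ or $x=z$. An element $g$ is idempotent if $g\odot g=g$; a minimal idempotent join-irreducible element is one that is minimal (in the lattice order) among the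 idempotent join-irreducible elements. The idempotent Euler characteristic $\chi^+:\mathcal{NM}_n\to\mathbb{R}$ is the unique valuation with $\chi^+(\bot)=0$ and, for each join-irreducible $g$, $\chi^+(g)=1$ if $g\odot g=g$ and $\chi^+(g)=0$ otherwise. *)

theory Defs
  imports "HOL-Analysis.Analysis"
begin

definition nm_tnorm :: "real \<Rightarrow> real \<Rightarrow> real" where
  "nm_tnorm x y = (if x + y > 1 then min x y else 0)"

definition nm_impl :: "real \<Rightarrow> real \<Rightarrow> real" where
  "nm_impl x y = (if x \<le> y then 1 else max (1 - x) y)"

definition cube :: "(real^'n) set" where
  "cube = {p. \<forall>i. 0 \<le> p $ i \<and> p $ i \<le> 1}"

text \<open>Functions [0,1]^n -> [0,1] are represented by functions on real^'n
  which are 0 outside the cube; the operations are pointwise on the cube.\<close>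
definition lift2 :: "(real \<Rightarrow> real \<Rightarrow> real) \<Rightarrow> (real^'n \<Rightarrow> real) \<Rightarrow> (real^'n \<Rightarrow> real) \<Rightarrow> (real^'n \<Rightarrow> real)" where
  "lift2 op f g = (\<lambda>p. if p \<in> cube then op (f p) (g p) else 0)"

definition nm_bot :: "real^'n \<Rightarrow> real" where
  "nm_bot = (\<lambda>p. 0)"

definition nm_top :: "real^'n \<Rightarrow> real" where
  "nm_top = (\<lambda>p. if p \<in> cube then 1 else 0)"

definition nm_proj :: "'n \<Rightarrow> real^'n \<Rightarrow> real" where
  "nm_proj i = (\<lambda>p. if p \<in> cube then p $ i else 0)"

definition nm_conj :: "(real^'n \<Rightarrow> real) \<Rightarrow> (real^'n \<Rightarrow> real) \<Rightarrow> (real^'n \<Rightarrow> real)" where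
  "nm_conj = lift2 nm_tnorm"

inductive_set NM :: "(real^'n \<Rightarrow> real) set" where
  proj: "nm_proj i \<in> NM"
| bot: "nm_bot \<in> NM"
| top: "nm_top \<in> NM"
| meet: "f \<in> NM \<Longrightarrow> g \<in> NM \<Longrightarrow> lift2 min f g \<in> NM"
| join: "f \<in> NM \<Longrightarrow> g \<in> NM \<Longrightarrow> lift2 max f g \<in> NM"
| conj: "f \<in> NM \<Longrightarrow> g \<in> NM \<Longrightarrow> lift2 nm_tnorm f g \<in> NM"
| impl: "f \<in> NM \<Longrightarrow> g \<in> NM \<Longrightarrow> lift2 nm_impl f g \<in> NM"

text \<open>The lattice order of NM_n is the pointwise order (\<le> on functions);
  join and meet are pointwise max/min, i.e. sup and inf on functions.\<close>

definition join_irreducible :: "(real^'n \<Rightarrow> real) \<Rightarrow> bool" where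
  "join_irreducible x \<longleftrightarrow> x \<in> NM \<and> x \<noteq> nm_bot \<and>
     (\<forall>y\<in>NM. \<forall>z\<in>NM. x = sup y z \<longrightarrow> x = y \<or> x = z)"

definition idempotent :: "(real^'n \<Rightarrow> real) \<Rightarrow> bool" where
  "idempotent g \<longleftrightarrow> nm_conj g g = g"

definition min_idem_ji :: "(real^'n \<Rightarrow> real) \<Rightarrow> bool" where
  "min_idem_ji g \<longleftrightarrow> join_irreducible g \<and> idempotent g \<and>
     (\<forall>h. join_irreducible h \<and> idempotent h \<and> h \<le> g \<longrightarrow> h = g)"

definition valuation_on_NM :: "((real^'n \<Rightarrow> real) \<Rightarrow> real) \<Rightarrow> bool" where
  "valuation_on_NM \<nu> \<longleftrightarrow>
     (\<forall>x\<in>NM. \<forall>y\<in>NM. \<nu> x + \<nu> y = \<nu> (sup x y) + \<nu> (inf x y))"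

text \<open>The idempotent Euler characteristic: the unique valuation with the
  prescribed values (made unique as a HOL function by being 0 off NM_n).\<close>
definition chi_plus :: "(real^'n \<Rightarrow> real) \<Rightarrow> real" where
  "chi_plus = (THE \<nu>. valuation_on_NM \<nu> \<and> \<nu> nm_bot = 0 \<and>
      (\<forall>g. join_irreducible g \<longrightarrow> \<nu> g = (if idempotent g then 1 else 0)) \<and>
      (\<forall>x. x \<notin> NM \<longrightarrow> \<nu> x = 0))"

end

theory Submission
  imports Defs
begin

text \<open>Join-irreducibles of the finite distributive lattice \<open>NM\<^sub>n\<close> are join-prime, so
  \<open>x \<mapsto> #{minimal idempotent join-irreducibles below x}\<close> is a valuation. It vanishes at
  \<open>\<bottom>\<close>, and a valuation is determined by its values at \<open>\<bottom>\<close> and at the join-irreducibles.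
  A non-idempotent join-irreducible \<open>g\<close> equals \<open>g \<and> \<not>(g \<odot> g)\<close>, so it is bounded by \<open>1/2\<close>;
  an idempotent element takes values in \<open>{0} \<union> (1/2, 1]\<close>, so only \<open>\<bottom>\<close> lies below \<open>g\<close>
  among them. Below an idempotent join-irreducible \<open>g\<close> the idempotent join-irreducibles
  form a chain, since \<open>g = (g \<and> (h \<rightarrow> h')) \<or> (g \<and> (h' \<rightarrow> h))\<close>; so exactly one minimal
  one lies below \<open>g\<close>.\<close>

type_synonym 'n literal = "bool \<times> 'n option"

text \<open>\<open>(False, None)\<close>, \<open>(True, None)\<close>, \<open>(False, Some i)\<close>, \<open>(True, Some i)\<close> denote
  \<open>0\<close>, \<open>1\<close>, \<open>x\<^sub>i\<close> and \<open>1 - x\<^sub>i\<close>.\<close>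
definition lit_val :: "'n literal \<Rightarrow> real^'n \<Rightarrow> real" where
  "lit_val a p = (let v = (case snd a of None \<Rightarrow> 0 | Some i \<Rightarrow> p $ i) in if fst a then 1 - v else v)"

definition lit_neg :: "'n literal \<Rightarrow> 'n literal" where
  "lit_neg a = (\<not> fst a, snd a)"

lemma lit_val_neg: "lit_val (lit_neg a) p = 1 - lit_val a p"
  by (cases a) (auto simp: lit_val_def lit_neg_def Let_def)

lemma lit_val_const [simp]: "lit_val (False, None) p = 0" "lit_val (True, None) p = 1"
  by (auto simp: lit_val_def)

lemma lit_val_bounds: "p \<in> cube \<Longrightarrow> 0 \<le> lit_val a p \<and> lit_val a p \<le> 1"
  by (cases a) (auto simp: lit_val_def Let_def cube_def split: option.splits)

definition order_type :: "real^'n \<Rightarrow> 'n literal \<Rightarrow> 'n literal \<Rightarrow> bool" where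
  "order_type p a b \<longleftrightarrow> lit_val a p \<le> lit_val b p"

text \<open>Every element of \<open>NM\<close> is of this form: at each point it is the literal that \<open>\<sigma>\<close>
  selects from the relative order of all literals at that point. As there are finitely
  many literals, this makes \<open>NM\<close> finite.\<close>
definition select_by_order_type ::
    "(('n::finite literal \<Rightarrow> 'n literal \<Rightarrow> bool) \<Rightarrow> 'n literal) \<Rightarrow> real^'n \<Rightarrow> real" where
  "select_by_order_type \<sigma> = (\<lambda>p. if p \<in> cube then lit_val (\<sigma> (order_type p)) p else 0)"

lemma NM_select_by_order_type: "f \<in> NM \<Longrightarrow> \<exists>\<sigma>. f = select_by_order_type \<sigma>"
proof (induction rule: NM.induct)
  case (proj i)
  show ?case
    by (rule exI[of _ "\<lambda>_. (False, Some i)"])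
       (auto simp: select_by_order_type_def nm_proj_def lit_val_def)
next
  case bot
  show ?case
    by (rule exI[of _ "\<lambda>_. (False, None)"]) (auto simp: select_by_order_type_def nm_bot_def)
next
  case top
  show ?case
    by (rule exI[of _ "\<lambda>_. (True, None)"]) (auto simp: select_by_order_type_def nm_top_def)
next
  case (meet f g)
  then obtain s t where "f = select_by_order_type s" "g = select_by_order_type t" by blast
  then show ?case
    by (intro exI[of _ "\<lambda>r. if r (s r) (t r) then s r else t r"])
       (auto simp: select_by_order_type_def lift2_def order_type_def)
next
  case (join f g)
  then obtain s t where "f = select_by_order_type s" "g = select_by_order_type t" by blast
  then show ?case
    by (intro exI[of _ "\<lambda>r. if r (s r) (t r) then t r else s r"])
       (auto simp: select_by_order_type_def lift2_def order_type_def)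
next
  case (conj f g)
  then obtain s t where "f = select_by_order_type s" "g = select_by_order_type t" by blast
  then show ?case
    by (intro exI[of _ "\<lambda>r. if r (s r) (lit_neg (t r)) then (False, None)
                           else if r (s r) (t r) then s r else t r"])
       (auto simp: select_by_order_type_def lift2_def order_type_def lit_val_neg nm_tnorm_def)
next
  case (impl f g)
  then obtain s t where "f = select_by_order_type s" "g = select_by_order_type t" by blast
  then show ?case
    by (intro exI[of _ "\<lambda>r. if r (s r) (t r) then (True, None)
                           else if r (lit_neg (s r)) (t r) then t r else lit_neg (s r)"])
       (auto simp: select_by_order_type_def lift2_def order_type_def lit_val_neg nm_impl_def)
qed

lemma finite_NM: "finite (NM :: (real^'n \<Rightarrow> real) set)"
proof (rule finite_subset)
  show "NM \<subseteq> range (select_by_order_type :: _ \<Rightarrow> real^'n \<Rightarrow> real)"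
    using NM_select_by_order_type by blast
qed simp

lemma NM_outside_cube: "f \<in> NM \<Longrightarrow> p \<notin> cube \<Longrightarrow> f p = 0"
  using NM_select_by_order_type by (fastforce simp: select_by_order_type_def)

lemma NM_bounds: "f \<in> NM \<Longrightarrow> 0 \<le> f p \<and> f p \<le> 1"
  using NM_select_by_order_type lit_val_bounds by (fastforce simp: select_by_order_type_def)

lemma lift2_min_eq_inf: "f \<in> NM \<Longrightarrow> g \<in> NM \<Longrightarrow> lift2 min f g = inf f g"
  by (rule ext) (auto simp: lift2_def NM_outside_cube inf_real_def sup_real_def)

lemma lift2_max_eq_sup: "f \<in> NM \<Longrightarrow> g \<in> NM \<Longrightarrow> lift2 max f g = sup f g"
  by (rule ext) (auto simp: lift2_def NM_outside_cube inf_real_def sup_real_def)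

lemma inf_in_NM: "f \<in> NM \<Longrightarrow> g \<in> NM \<Longrightarrow> inf f g \<in> NM"
  by (metis NM.meet lift2_min_eq_inf)

lemma sup_in_NM: "f \<in> NM \<Longrightarrow> g \<in> NM \<Longrightarrow> sup f g \<in> NM"
  by (metis NM.join lift2_max_eq_sup)

lemma NM_le_bot_iff: "f \<in> NM \<Longrightarrow> f \<le> nm_bot \<longleftrightarrow> f = nm_bot"
  using NM_bounds[of f] by (auto simp: nm_bot_def le_fun_def intro!: ext order.antisym)

lemma join_irreducible_in_NM: "join_irreducible g \<Longrightarrow> g \<in> NM"
  by (simp add: join_irreducible_def)

lemma join_irreducible_sup_cases:
  "join_irreducible g \<Longrightarrow> y \<in> NM \<Longrightarrow> z \<in> NM \<Longrightarrow> g = sup y z \<Longrightarrow> g = y \<or> g = z"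
  unfolding join_irreducible_def by blast

lemma join_irreducible_le_supD:
  assumes g: "join_irreducible g" and x: "x \<in> NM" and y: "y \<in> NM" and le: "g \<le> sup x y"
  shows "g \<le> x \<or> g \<le> y"
proof -
  have "g = sup (inf g x) (inf g y)"
    using le by (metis inf_absorb1 inf_sup_distrib1)
  then have "g = inf g x \<or> g = inf g y"
    using g x y by (intro join_irreducible_sup_cases) (auto intro: inf_in_NM join_irreducible_in_NM)
  then show ?thesis
    by (metis inf.cobounded2)
qed

lemma nm_tnorm_self_eq_iff: "nm_tnorm a a = a \<longleftrightarrow> a = 0 \<or> 1/2 < a"
  by (auto simp: nm_tnorm_def)

lemma idempotent_values: "idempotent h \<Longrightarrow> h p = 0 \<or> 1/2 < h p"
  unfolding idempotent_def nm_conj_def lift2_def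
  by (drule fun_cong[of _ _ p]) (auto simp: nm_tnorm_self_eq_iff split: if_splits)

lemma idempotent_le_half_eq_bot:
  assumes "idempotent h" and "\<And>p. h p \<le> 1/2"
  shows "h = nm_bot"
proof (rule ext)
  fix p
  show "h p = nm_bot p"
    using idempotent_values[OF assms(1), of p] assms(2)[of p] by (auto simp: nm_bot_def)
qed

lemma join_irreducible_not_idempotent_le_half:
  assumes g: "join_irreducible g" and not_idem: "\<not> idempotent g"
  shows "g p \<le> 1/2"
proof -
  have gN: "g \<in> NM" using g by (rule join_irreducible_in_NM)
  define sq where "sq = lift2 nm_tnorm g g"
  define rest where "rest = lift2 min g (lift2 nm_impl sq nm_bot)"
  have "sq \<in> NM" "rest \<in> NM"
    unfolding sq_def rest_def by (intro NM.intros gN)+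
  moreover have "g = sup sq rest"
  proof (rule ext)
    fix q
    show "g q = sup sq rest q"
      using NM_bounds[OF gN, of q] NM_outside_cube[OF gN, of q]
      by (auto simp: sq_def rest_def lift2_def nm_tnorm_def nm_impl_def nm_bot_def sup_real_def)
  qed
  moreover have "g \<noteq> sq"
    using not_idem unfolding idempotent_def nm_conj_def sq_def by metis
  ultimately have "g = rest"
    using join_irreducible_sup_cases[OF g] by blast
  then have "g p = rest p" by simp
  then show ?thesis
    using NM_bounds[OF gN, of p]
    by (auto simp: sq_def rest_def lift2_def nm_tnorm_def nm_impl_def nm_bot_def split: if_splits)
qed

lemma idempotent_value_le_impl:
  fixes a b :: real
  assumes "a = 0 \<or> 1/2 < a" and "0 \<le> b" and "a \<le> nm_impl a b"
  shows "a \<le> b"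
  using assms by (auto simp: nm_impl_def max_def split: if_splits)

lemma idempotent_le_if_le_impl:
  assumes h: "idempotent h" "h \<in> NM" and h': "h' \<in> NM"
    and below: "h \<le> g" "g \<le> lift2 nm_impl h h'"
  shows "h \<le> h'"
proof (rule le_funI)
  fix p
  show "h p \<le> h' p"
  proof (cases "p \<in> cube")
    case False
    then show ?thesis using NM_outside_cube[OF h(2) False] NM_outside_cube[OF h' False] by simp
  next
    case True
    have "h p \<le> g p" using below(1) by (rule le_funD)
    also have "g p \<le> nm_impl (h p) (h' p)" using le_funD[OF below(2), of p] True by (simp add: lift2_def)
    finally show ?thesis
      using idempotent_value_le_impl idempotent_values[OF h(1)] NM_bounds[OF h'] by blast
  qed
qed

lemma idempotent_join_irreducibles_below_chain:
  assumes g: "join_irreducible g"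
    and h: "idempotent h" "h \<in> NM" "h \<le> g"
    and h': "idempotent h'" "h' \<in> NM" "h' \<le> g"
  shows "h \<le> h' \<or> h' \<le> h"
proof -
  have gN: "g \<in> NM" using g by (rule join_irreducible_in_NM)
  define a where "a = lift2 min g (lift2 nm_impl h h')"
  define b where "b = lift2 min g (lift2 nm_impl h' h)"
  have "a \<in> NM" "b \<in> NM"
    unfolding a_def b_def by (intro NM.intros gN h h')+
  moreover have "g = sup a b"
  proof (rule ext)
    fix q
    show "g q = sup a b q"
      using NM_bounds[OF gN, of q] NM_outside_cube[OF gN, of q]
      by (auto simp: a_def b_def lift2_def nm_impl_def sup_real_def)
  qed
  ultimately have "g = a \<or> g = b"
    using join_irreducible_sup_cases[OF g] by blast
  moreover have "a \<le> lift2 nm_impl h h'" "b \<le> lift2 nm_impl h' h"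
    by (auto simp: a_def b_def lift2_def le_fun_def)
  ultimately show ?thesis
    using idempotent_le_if_le_impl h h' by metis
qed

definition min_idem_ji_below :: "(real^'n \<Rightarrow> real) \<Rightarrow> (real^'n \<Rightarrow> real) set" where
  "min_idem_ji_below x = {g. min_idem_ji g \<and> g \<le> x}"

lemma min_idem_ji_below_bot: "min_idem_ji_below nm_bot = {}"
  using NM_le_bot_iff
  by (auto simp: min_idem_ji_below_def min_idem_ji_def join_irreducible_def)

lemma min_idem_ji_below_not_idempotent:
  assumes g: "join_irreducible g" "\<not> idempotent g"
  shows "min_idem_ji_below g = {}"
proof -
  have "h = nm_bot" if "idempotent h" "h \<le> g" for h
    using that join_irreducible_not_idempotent_le_half[OF g] order_trans
    by (metis idempotent_le_half_eq_bot le_funD)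
  then show ?thesis
    by (auto simp: min_idem_ji_below_def min_idem_ji_def join_irreducible_def)
qed

lemma card_min_idem_ji_below_idempotent:
  assumes g: "join_irreducible g" "idempotent g"
  shows "card (min_idem_ji_below g) = 1"
proof -
  define S where "S = {h. join_irreducible h \<and> idempotent h \<and> h \<le> g}"
  have "finite S"
    by (rule finite_subset[OF _ finite_NM]) (auto simp: S_def join_irreducible_def)
  moreover have "g \<in> S" using g by (simp add: S_def)
  ultimately obtain m where m: "m \<in> S" "\<forall>h\<in>S. h \<le> m \<longrightarrow> m = h"
    using finite_has_minimal[of S] by blast
  have m_min: "m \<in> min_idem_ji_below g"
    using m unfolding min_idem_ji_below_def S_def min_idem_ji_def by (auto intro: order_trans)
  have "h = m" if "h \<in> min_idem_ji_below g" for h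
  proof -
    have h: "min_idem_ji h" "h \<le> g" and m': "min_idem_ji m" "m \<le> g"
      using that m_min by (auto simp: min_idem_ji_below_def)
    then have "h \<le> m \<or> m \<le> h"
      using idempotent_join_irreducibles_below_chain[OF g(1)] join_irreducible_in_NM
      unfolding min_idem_ji_def by blast
    then show "h = m"
      using h m' unfolding min_idem_ji_def by metis
  qed
  then have "min_idem_ji_below g = {m}"
    using m_min by blast
  then show ?thesis by simp
qed

lemma valuation_card_below:
  fixes P :: "(real^'n \<Rightarrow> real) set"
  assumes "P \<subseteq> {g. join_irreducible g}" "finite P"
  shows "valuation_on_NM (\<lambda>x. real (card {g\<in>P. g \<le> x}))"
  unfolding valuation_on_NM_def
proof (intro ballI)
  fix x y :: "real^'n \<Rightarrow> real"
  assume xy: "x \<in> NM" "y \<in> NM"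
  let ?B = "\<lambda>x. {g\<in>P. g \<le> x}"
  have "g \<le> x \<or> g \<le> y \<longleftrightarrow> g \<le> sup x y" if "g \<in> P" for g
    using that assms(1) join_irreducible_le_supD[OF _ xy, of g] le_supI1 le_supI2 by blast
  then have "?B (sup x y) = ?B x \<union> ?B y"
    by blast
  moreover have "?B (inf x y) = ?B x \<inter> ?B y"
    by auto
  moreover have "card (?B x) + card (?B y) = card (?B x \<union> ?B y) + card (?B x \<inter> ?B y)"
    using assms(2) by (intro card_Un_Int) auto
  ultimately have "card (?B x) + card (?B y) = card (?B (sup x y)) + card (?B (inf x y))"
    by simp
  then show "real (card (?B x)) + real (card (?B y))
             = real (card (?B (sup x y))) + real (card (?B (inf x y)))"
    unfolding of_nat_add[symmetric] of_nat_eq_iff .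
qed

lemma valuation_on_NM_unique:
  assumes \<nu>: "valuation_on_NM \<nu>" and \<mu>: "valuation_on_NM \<mu>" and bot: "\<nu> nm_bot = \<mu> nm_bot"
    and ji: "\<And>g. join_irreducible g \<Longrightarrow> \<nu> g = \<mu> g"
    and x: "x \<in> NM"
  shows "\<nu> x = \<mu> x"
  using x
proof (induction "card {y\<in>NM. y < x}" arbitrary: x rule: less_induct)
  case less
  show ?case
  proof (cases "x = nm_bot \<or> join_irreducible x")
    case True
    then show ?thesis using bot ji by blast
  next
    case False
    then obtain y z where yz: "y \<in> NM" "z \<in> NM" "x = sup y z" "x \<noteq> y" "x \<noteq> z"
      using less.prems unfolding join_irreducible_def by blast
    have "y < x" "z < x"
      using yz by (auto simp: less_le)
    then have below: "y < x" "z < x" "inf y z < x"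
      by (auto intro: le_less_trans[OF inf.cobounded1])
    have IH: "\<nu> u = \<mu> u" if "u \<in> NM" "u < x" for u
    proof (rule less.hyps[OF psubset_card_mono that(1)])
      show "finite {w\<in>NM. w < x}" using finite_NM by auto
      show "{w\<in>NM. w < u} \<subset> {w\<in>NM. w < x}"
        using that by (auto intro: order.strict_trans)
    qed
    have "\<nu> y + \<nu> z = \<nu> x + \<nu> (inf y z)" "\<mu> y + \<mu> z = \<mu> x + \<mu> (inf y z)"
      using \<nu> \<mu> yz unfolding valuation_on_NM_def by blast+
    moreover have "\<nu> y = \<mu> y" "\<nu> z = \<mu> z" "\<nu> (inf y z) = \<mu> (inf y z)"
      using IH yz below inf_in_NM by blast+
    ultimately show ?thesis by linarith
  qed
qed

lemma chi_plus_eqI: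
  fixes \<mu> :: "(real^'n \<Rightarrow> real) \<Rightarrow> real"
  assumes val: "valuation_on_NM \<mu>" and bot: "\<mu> nm_bot = 0"
    and ji: "\<And>g. join_irreducible g \<Longrightarrow> \<mu> g = (if idempotent g then 1 else 0)"
    and off: "\<And>x. x \<notin> NM \<Longrightarrow> \<mu> x = 0"
  shows "chi_plus = \<mu>"
  unfolding chi_plus_def
proof (rule the_equality)
  fix \<nu> :: "(real^'n \<Rightarrow> real) \<Rightarrow> real"
  assume \<nu>: "valuation_on_NM \<nu> \<and> \<nu> nm_bot = 0 \<and>
      (\<forall>g. join_irreducible g \<longrightarrow> \<nu> g = (if idempotent g then 1 else 0)) \<and>
      (\<forall>x. x \<notin> NM \<longrightarrow> \<nu> x = 0)"
  show "\<nu> = \<mu>"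
  proof (rule ext)
    fix x
    show "\<nu> x = \<mu> x"
    proof (cases "x \<in> NM")
      case True
      show ?thesis
      proof (rule valuation_on_NM_unique[OF _ val _ _ True])
        show "valuation_on_NM \<nu>" "\<nu> nm_bot = \<mu> nm_bot"
          using \<nu> bot by simp_all
        show "\<nu> g = \<mu> g" if "join_irreducible g" for g
          using \<nu> ji[OF that] that by simp
      qed
    qed (use \<nu> off in simp)
  qed
qed (use assms in blast)

lemma chi_plus_eq_card_min_idem_ji_below:
  "chi_plus = (\<lambda>x. if x \<in> NM then real (card (min_idem_ji_below x)) else 0)"
proof (rule chi_plus_eqI)
  have min_idem_ji_below_eq: "min_idem_ji_below x = {g \<in> {h. min_idem_ji h}. g \<le> x}" for x
    by (auto simp: min_idem_ji_below_def)
  have min_idem_ji_NM: "{h. min_idem_ji h} \<subseteq> NM"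
    by (auto simp: min_idem_ji_def join_irreducible_def)
  have "valuation_on_NM (\<lambda>x. real (card (min_idem_ji_below x)))"
    unfolding min_idem_ji_below_eq
    by (rule valuation_card_below)
       (auto simp: min_idem_ji_def intro: finite_subset[OF min_idem_ji_NM finite_NM])
  then show "valuation_on_NM (\<lambda>x. if x \<in> NM then real (card (min_idem_ji_below x)) else 0)"
    by (simp add: valuation_on_NM_def sup_in_NM inf_in_NM)
  show "(if nm_bot \<in> NM then real (card (min_idem_ji_below nm_bot)) else 0) = 0"
    by (simp add: min_idem_ji_below_bot)
  fix g :: "real^'n \<Rightarrow> real"
  assume g: "join_irreducible g"
  show "(if g \<in> NM then real (card (min_idem_ji_below g)) else 0) = (if idempotent g then 1 else 0)"
    using card_min_idem_ji_below_idempotent[OF g] min_idem_ji_below_not_idempotent[OF g]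
    by (simp add: join_irreducible_in_NM[OF g])
qed simp

theorem lemma3:
  fixes x :: "real^'n \<Rightarrow> real"
  assumes "x \<in> NM"
  shows "chi_plus x = real (card {g. min_idem_ji g \<and> g \<le> x})"
  using assms by (simp add: chi_plus_eq_card_min_idem_ji_below min_idem_ji_below_def)

end
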